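(* Let $f:\mathbb{Z}_+\to[0,\infty)$ be a function with $f(n)\log^2 n\to 0$ as $n\to\infty$. For every $\varepsilon\in(0,1/2)$ there exist $n_0\in\mathbb{Z}_+$ and $\delta=\delta(\varepsilon)>0$ such that the following holds. Let $G$ be a graph with $n\ge n_0$ vertices, $m\ge(1-f(n))n^2/2$ edges, and maximum density $\rho(G)=m/n$. If $$k\ge(1+\delta)\sqrt{\frac{\rho(G)}{\log\rho(G)}},$$ then with probability at least $1-\varepsilon$, $G$ is conflict $\{c_v\}$-colorable for a random local $k$-partition $\{c_v\}$ of $G$.
   Context: For a graph $G$ and vertex $v$, $E(v)$ is the set of edges incident with $v$. A local $k$-partition of $G$ is a collection $\{c_v\}$ of maps $c_v:E(v)\to\{1,\dots,k\}$; $G$ is conflict $\{c_v\}$-colorable if there is $\varphi:V(G)\to\{1,\dots,k\}$ such that no edge $e=xy$ has $\varphi(x)=c_x(e)$ and $\varphi(y)=c_y(e)$. A random local $k$-partition is obtained by choosing, for each edge $e=xy$, the pair $(c_x(e),c_y(e))$ uniformly at random from $[k]^2$, independently over edges. The maximum density is $\rho(G)=\max\{|E(G')|/|V(G')|:\emptyset\ne G'\subseteq G\}$. $\log$ is the natural logarithm. *)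

theory Defs
  imports "HOL-Analysis.Analysis"
begin

definition simple_graph :: "'a set \<Rightarrow> 'a set set \<Rightarrow> bool" where
  "simple_graph V E \<longleftrightarrow> finite V \<and> (\<forall>e\<in>E. e \<subseteq> V \<and> card e = 2)"

text \<open>Incidences (v,e) with v an endpoint of e; a local k-partition is a map on incidences
  (c(v,e) = c_v(e)) into {1..k}.\<close>
definition incidences :: "'a set set \<Rightarrow> ('a \<times> 'a set) set" where
  "incidences E = {(v, e). e \<in> E \<and> v \<in> e}"

definition local_partitions :: "'a set set \<Rightarrow> nat \<Rightarrow> ('a \<times> 'a set \<Rightarrow> nat) set" where
  "local_partitions E k = (incidences E \<rightarrow>\<^sub>E {1..k})"

definition conflict_colorable ::
    "'a set \<Rightarrow> 'a set set \<Rightarrow> nat \<Rightarrow> ('a \<times> 'a set \<Rightarrow> nat) \<Rightarrow> bool" where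
  "conflict_colorable V E k c \<longleftrightarrow>
     (\<exists>\<phi>. (\<forall>v\<in>V. \<phi> v \<in> {1..k}) \<and>
          (\<forall>e\<in>E. \<forall>x y. e = {x, y} \<and> x \<noteq> y \<longrightarrow>
                    \<not> (\<phi> x = c (x, e) \<and> \<phi> y = c (y, e))))"

text \<open>Probability over a uniformly random local k-partition (uniform over all maps on
  incidences, i.e. independent uniform pairs per edge).\<close>
definition prob_colorable :: "'a set \<Rightarrow> 'a set set \<Rightarrow> nat \<Rightarrow> real" where
  "prob_colorable V E k =
     real (card {c \<in> local_partitions E k. conflict_colorable V E k c})
       / real (card (local_partitions E k))"

definition max_density :: "'a set \<Rightarrow> 'a set set \<Rightarrow> real" where
  "max_density V E = Max {real (card E') / real (card V') | V' E'.
      V' \<subseteq> V \<and> V' \<noteq> {} \<and> E' \<subseteq> E \<and> (\<forall>e\<in>E'. e \<subseteq> V')}"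

end

theory Submission
  imports Defs "HOL-Real_Asymp.Real_Asymp"
begin

text \<open>Colour the vertices greedily in increasing order: vertex v takes the least colour not
  forbidden by an earlier neighbour u, where u forbids c_v(uv) exactly when u's colour equals
  c_u(uv). Given the colours chosen before v, the d \<le> n pairs (c_u(uv), c_v(uv)) at v are still
  uniform and independent, so a fixed colour is forbidden with probability
  1 - (1 - 1/k^2)^d and, by a coupon-collector estimate, all k colours are forbidden with
  probability at most (1 - (1 - 1/k^2)^n)^k. For k \<ge> 4 (n / log n)^(1/2) this is at most
  exp (-k n^(-1/8)), so the union bound over the n vertices tends to 0. In a graph with
  m \<ge> (1 - o(1)) n^2/2 edges and \<rho> = m/n we have n/4 \<le> \<rho> \<le> n, so k \<ge> 8 (\<rho> / log \<rho>)^(1/2)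
  suffices; that is, the statement holds with \<delta> = 7.\<close>

lemma card_PiE_filter_insert:
  assumes "w \<notin> U" "finite U" "\<And>i. finite (T i)"
  shows "card {b \<in> Pi\<^sub>E (insert w U) T. P b} = (\<Sum>y\<in>T w. card {g \<in> Pi\<^sub>E U T. P (g(w := y))})"
proof -
  let ?Sig = "SIGMA y:T w. {g \<in> Pi\<^sub>E U T. P (g(w := y))}"
  have "{b \<in> Pi\<^sub>E (insert w U) T. P b} = (\<lambda>(y, g). g(w := y)) ` ?Sig"
    unfolding PiE_insert_eq by auto
  moreover have "inj_on (\<lambda>(y, g). g(w := y)) ?Sig"
    by (rule inj_on_subset[OF inj_combinator[OF assms(1)]]) auto
  ultimately have "card {b \<in> Pi\<^sub>E (insert w U) T. P b} = card ?Sig"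
    by (simp add: card_image)
  also have "\<dots> = (\<Sum>y\<in>T w. card {g \<in> Pi\<^sub>E U T. P (g(w := y))})"
    using assms by (intro card_SigmaI) (auto intro: finite_subset[OF _ finite_PiE[of U T]])
  finally show ?thesis .
qed

lemma card_PiE_filter_Un:
  assumes "finite A" "finite B" "A \<inter> B = {}" "\<And>i. finite (T i)"
  shows "card {c \<in> Pi\<^sub>E (A \<union> B) T. P c}
       = (\<Sum>a\<in>Pi\<^sub>E A T. card {b \<in> Pi\<^sub>E B T. P (merge A B (a, b))})"
proof -
  let ?Sig = "SIGMA a:Pi\<^sub>E A T. {b \<in> Pi\<^sub>E B T. P (merge A B (a, b))}"
  have "{c \<in> Pi\<^sub>E (A \<union> B) T. P c} = merge A B ` ?Sig"
  proof (intro equalityI subsetI)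
    fix c assume c: "c \<in> {c \<in> Pi\<^sub>E (A \<union> B) T. P c}"
    then have "merge A B (restrict c A, restrict c B) = c"
      using PiE_restrict[of c "A \<union> B" T] by simp
    with c show "c \<in> merge A B ` ?Sig"
      by (intro image_eqI[of _ _ "(restrict c A, restrict c B)"]) auto
  qed (use assms(3) in \<open>auto simp: PiE_iff\<close>)
  moreover have "inj_on (merge A B) ?Sig"
  proof (rule inj_onI, clarify)
    fix a b a' b'
    assume "a \<in> Pi\<^sub>E A T" "b \<in> Pi\<^sub>E B T" "a' \<in> Pi\<^sub>E A T" "b' \<in> Pi\<^sub>E B T"
      and eq: "merge A B (a, b) = merge A B (a', b')"
    moreover have "restrict a A = restrict a' A" "restrict b B = restrict b' B"
      using arg_cong[OF eq, of "\<lambda>c. restrict c A"] arg_cong[OF eq, of "\<lambda>c. restrict c B"] assms(3)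
      by simp_all
    ultimately show "a = a' \<and> b = b'"
      by (metis PiE_restrict)
  qed
  ultimately have "card {c \<in> Pi\<^sub>E (A \<union> B) T. P c} = card ?Sig"
    by (simp add: card_image)
  also have "\<dots> = (\<Sum>a\<in>Pi\<^sub>E A T. card {b \<in> Pi\<^sub>E B T. P (merge A B (a, b))})"
    using assms by (intro card_SigmaI) (auto intro: finite_subset[OF _ finite_PiE[of B T]] finite_PiE)
  finally show ?thesis .
qed

lemma card_filter_bij_betw:
  assumes "bij_betw f X Y"
  shows "card {x \<in> X. P (f x)} = card {y \<in> Y. P y}"
proof -
  have "bij_betw f {x \<in> X. P (f x)} {y \<in> Y. P y}"
    using assms unfolding bij_betw_def inj_on_def by auto
  then show ?thesis by (rule bij_betw_same_card)
qed

lemma bij_betw_PiE_pairs: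
  fixes a b :: "'u \<Rightarrow> 'i" and K :: "'k set"
  assumes "inj_on a U" "inj_on b U" "a ` U \<inter> b ` U = {}"
  shows "bij_betw (\<lambda>c. \<lambda>u\<in>U. (c (a u), c (b u)))
           (Pi\<^sub>E (a ` U \<union> b ` U) (\<lambda>_. K)) (Pi\<^sub>E U (\<lambda>_. K \<times> K))"
proof -
  define g where "g z = (\<lambda>i\<in>a ` U \<union> b ` U.
    if i \<in> a ` U then fst (z (inv_into U a i)) else snd (z (inv_into U b i)))" for z :: "'u \<Rightarrow> 'k \<times> 'k"
  have g_f: "g (\<lambda>u\<in>U. (c (a u), c (b u))) = c" if c: "c \<in> Pi\<^sub>E (a ` U \<union> b ` U) (\<lambda>_. K)" for c
  proof
    fix i
    consider u where "u \<in> U" "i = a u" | u where "u \<in> U" "i = b u" "i \<notin> a ` U"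
      | "i \<notin> a ` U \<union> b ` U"
      by blast
    then show "g (\<lambda>u\<in>U. (c (a u), c (b u))) i = c i"
    proof cases
      case 1
      have "i \<in> a ` U" "inv_into U a i = u"
        using 1(2) image_eqI[where f = a, OF 1(2) 1(1)] inv_into_f_f[OF assms(1) 1(1)] by simp_all
      then have "g (\<lambda>u\<in>U. (c (a u), c (b u))) i = c (a u)"
        using 1(1) by (simp add: g_def)
      with 1 show ?thesis by simp
    next
      case 2
      have "i \<in> b ` U" "inv_into U b i = u"
        using 2(2) image_eqI[where f = b, OF 2(2) 2(1)] inv_into_f_f[OF assms(2) 2(1)] by simp_all
      then have "g (\<lambda>u\<in>U. (c (a u), c (b u))) i = c (b u)"
        using 2(1,3) by (simp add: g_def)
      with 2 show ?thesis by simp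
    next
      case 3
      then show ?thesis by (simp add: g_def PiE_arb[OF c])
    qed
  qed
  have f_g: "(\<lambda>u\<in>U. (g z (a u), g z (b u))) = z" if z: "z \<in> Pi\<^sub>E U (\<lambda>_. K \<times> K)" for z
  proof
    fix u show "(\<lambda>u\<in>U. (g z (a u), g z (b u))) u = z u"
    proof (cases "u \<in> U")
      case True
      then have "b u \<notin> a ` U" using assms(3) by blast
      with True show ?thesis using assms(1,2) by (simp add: g_def)
    qed (simp add: PiE_arb[OF z])
  qed
  have g_PiE: "g z \<in> Pi\<^sub>E (a ` U \<union> b ` U) (\<lambda>_. K)" if z: "z \<in> Pi\<^sub>E U (\<lambda>_. K \<times> K)" for z
  proof -
    have "z (inv_into U a i) \<in> K \<times> K" if "i \<in> a ` U" for i
      using z inv_into_into[OF that] by blast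
    moreover have "z (inv_into U b i) \<in> K \<times> K" if "i \<in> b ` U" for i
      using z inv_into_into[OF that] by blast
    ultimately show ?thesis
      unfolding g_def by (auto simp: mem_Times_iff)
  qed
  have f_PiE: "(\<lambda>u\<in>U. (c (a u), c (b u))) \<in> Pi\<^sub>E U (\<lambda>_. K \<times> K)"
    if "c \<in> Pi\<^sub>E (a ` U \<union> b ` U) (\<lambda>_. K)" for c
    using that by auto
  show ?thesis
    by (rule bij_betw_byWitness[where f' = g]) (use g_f f_g g_PiE f_PiE in \<open>simp_all add: image_subset_iff\<close>)
qed

lemma power_add_ge_linear_term:
  fixes q r :: real
  assumes "0 \<le> q" "0 \<le> r"
  shows "q ^ s + real s * q ^ (s - 1) * r \<le> (q + r) ^ s"
proof (induction s)
  case (Suc s)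
  have "q ^ Suc s + real (Suc s) * q ^ (Suc s - 1) * r \<le> (q + r) * (q ^ s + real s * q ^ (s - 1) * r)"
    using assms by (cases s) (simp_all add: algebra_simps)
  also have "\<dots> \<le> (q + r) * (q + r) ^ s"
    using Suc assms by (intro mult_left_mono) auto
  finally show ?case by simp
qed simp

text \<open>The probability that at least one of d independent uniform pairs in [k]^2 equals a given
  pair.\<close>
definition hit_prob :: "nat \<Rightarrow> nat \<Rightarrow> real" where
  "hit_prob k d = 1 - (1 - 1 / real k ^ 2) ^ d"

lemma hit_prob_Suc: "hit_prob k (Suc d) = hit_prob k d + (1 - hit_prob k d) / real k ^ 2"
  unfolding hit_prob_def by (simp add: field_simps)

lemma
  assumes "k \<ge> 1"
  shows hit_prob_nonneg: "0 \<le> hit_prob k d"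
    and hit_prob_le_1: "hit_prob k d \<le> 1"
    and hit_prob_mono: "d \<le> d' \<Longrightarrow> hit_prob k d \<le> hit_prob k d'"
proof -
  have base: "0 \<le> 1 - 1 / real k ^ 2" "1 - 1 / real k ^ 2 \<le> 1"
    using assms by (auto simp: field_simps)
  show "0 \<le> hit_prob k d"
    using power_le_one[OF base] unfolding hit_prob_def by simp
  show "hit_prob k d \<le> 1"
    using zero_le_power[OF base(1)] unfolding hit_prob_def by simp
  show "hit_prob k d \<le> hit_prob k d'" if "d \<le> d'"
    using power_decreasing[OF that base] unfolding hit_prob_def by simp
qed

definition hits :: "'u set \<Rightarrow> ('u \<Rightarrow> nat) \<Rightarrow> ('u \<Rightarrow> nat \<times> nat) \<Rightarrow> nat set" where
  "hits U t z = {snd (z u) | u. u \<in> U \<and> fst (z u) = t u}"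

lemma hits_empty [simp]: "hits {} t z = {}"
  unfolding hits_def by simp

lemma hits_insert_fun_upd:
  assumes "w \<notin> U"
  shows "hits (insert w U) t (z(w := y)) = hits U t z \<union> (if fst y = t w then {snd y} else {})"
  using assms unfolding hits_def by auto

lemma sum_power_card_Diff_hit_le:
  fixes q :: real
  assumes "S \<subseteq> {1..k}" "k \<ge> 1" "0 \<le> q" "q \<le> 1"
  shows "(\<Sum>y\<in>{1..k} \<times> {1..k}. q ^ card (S - (if fst y = t then {snd y} else {})))
           \<le> real k ^ 2 * (q + (1 - q) / real k ^ 2) ^ card S"
proof -
  define K where "K = {1..k}"
  define s where "s = card S"
  have finS: "finite S" using assms(1) finite_subset by blast
  have summand: "q ^ card (S - (if fst y = t then {snd y} else {}))
      = q ^ s + (if y \<in> {t} \<times> S then q ^ (s - 1) - q ^ s else 0)" for y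
    using finS by (cases y) (auto simp: s_def)
  have "(\<Sum>y\<in>K \<times> K. q ^ card (S - (if fst y = t then {snd y} else {})))
      = real k ^ 2 * q ^ s + real (card ((K \<times> K) \<inter> ({t} \<times> S))) * (q ^ (s - 1) - q ^ s)"
    unfolding summand by (simp add: sum.distrib sum.inter_restrict[symmetric] K_def card_cartesian_product power2_eq_square)
  also have "\<dots> \<le> real k ^ 2 * q ^ s + real s * (q ^ (s - 1) - q ^ s)"
  proof -
    have "card ((K \<times> K) \<inter> ({t} \<times> S)) \<le> card ({t} \<times> S)"
      using finS by (intro card_mono) auto
    moreover have "q ^ s \<le> q ^ (s - 1)"
      using assms(3,4) by (intro power_decreasing) auto
    ultimately show ?thesis
      by (intro add_left_mono mult_right_mono) (auto simp: s_def card_cartesian_product)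
  qed
  also have "\<dots> = real k ^ 2 * (q ^ s + real s * q ^ (s - 1) * ((1 - q) / real k ^ 2))"
    using assms(2) by (cases s) (simp_all add: field_simps)
  also have "\<dots> \<le> real k ^ 2 * (q + (1 - q) / real k ^ 2) ^ s"
    using assms(3,4) by (intro mult_left_mono power_add_ge_linear_term) auto
  finally show ?thesis unfolding K_def s_def .
qed

text \<open>Coupon collecting: each colour of S is hit with probability hit_prob k |U|, and these
  events are negatively correlated.\<close>
lemma card_PiE_hits_superset_le:
  assumes "finite U" "k \<ge> 1" "S \<subseteq> {1..k}"
  shows "real (card {z \<in> Pi\<^sub>E U (\<lambda>_. {1..k} \<times> {1..k}). S \<subseteq> hits U t z})
           \<le> real k ^ (2 * card U) * hit_prob k (card U) ^ card S"
  using assms(1,3)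
proof (induction U arbitrary: S rule: finite_induct)
  case empty
  show ?case
  proof (cases "S = {}")
    case False
    then have "card S > 0"
      using empty.prems finite_subset by (auto simp: card_gt_0_iff)
    with False show ?thesis by (auto simp: hit_prob_def)
  qed (simp add: PiE_empty_domain hit_prob_def)
next
  case (insert w U)
  define K where "K = {1..k}"
  define X where "X y = (if fst y = t w then {snd y} else {})" for y :: "nat \<times> nat"
  define q where "q = hit_prob k (card U)"
  have "card {z \<in> Pi\<^sub>E (insert w U) (\<lambda>_. K \<times> K). S \<subseteq> hits (insert w U) t z}
      = (\<Sum>y\<in>K \<times> K. card {g \<in> Pi\<^sub>E U (\<lambda>_. K \<times> K). S \<subseteq> hits (insert w U) t (g(w := y))})"
    using insert(1,2) unfolding K_def by (intro card_PiE_filter_insert) auto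
  also have "\<dots> = (\<Sum>y\<in>K \<times> K. card {g \<in> Pi\<^sub>E U (\<lambda>_. K \<times> K). S - X y \<subseteq> hits U t g})"
    by (intro sum.cong refl arg_cong[where f = card] Collect_cong conj_cong)
      (auto simp: hits_insert_fun_upd[OF insert(2)] X_def)
  finally have "real (card {z \<in> Pi\<^sub>E (insert w U) (\<lambda>_. K \<times> K). S \<subseteq> hits (insert w U) t z})
      = (\<Sum>y\<in>K \<times> K. real (card {g \<in> Pi\<^sub>E U (\<lambda>_. K \<times> K). S - X y \<subseteq> hits U t g}))"
    by simp
  also have "\<dots> \<le> (\<Sum>y\<in>K \<times> K. real k ^ (2 * card U) * q ^ card (S - X y))"
    using insert(3) insert(4) unfolding K_def q_def by (intro sum_mono) blast
  also have "\<dots> = real k ^ (2 * card U) * (\<Sum>y\<in>K \<times> K. q ^ card (S - X y))"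
    by (simp add: sum_distrib_left)
  also have "\<dots> \<le> real k ^ (2 * card U) * (real k ^ 2 * (q + (1 - q) / real k ^ 2) ^ card S)"
    unfolding K_def X_def q_def using insert(4) assms(2) hit_prob_nonneg hit_prob_le_1
    by (intro mult_left_mono sum_power_card_Diff_hit_le) auto
  also have "\<dots> = real k ^ (2 * card (insert w U)) * hit_prob k (card (insert w U)) ^ card S"
    using insert(1,2) by (simp add: q_def hit_prob_Suc power_add power2_eq_square)
  finally show ?case unfolding K_def .
qed

definition earlier_neighbours :: "nat set set \<Rightarrow> nat \<Rightarrow> nat set" where
  "earlier_neighbours E v = {u. u < v \<and> {u, v} \<in> E}"

definition edge_pairs :: "nat set set \<Rightarrow> nat \<Rightarrow> (nat \<times> nat set \<Rightarrow> nat) \<Rightarrow> nat \<Rightarrow> nat \<times> nat" where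
  "edge_pairs E v c = (\<lambda>u\<in>earlier_neighbours E v. (c (u, {u, v}), c (v, {u, v})))"

definition forbidden_colours ::
    "nat set set \<Rightarrow> (nat \<times> nat set \<Rightarrow> nat) \<Rightarrow> (nat \<Rightarrow> nat) \<Rightarrow> nat \<Rightarrow> nat set" where
  "forbidden_colours E c \<phi> v = hits (earlier_neighbours E v) \<phi> (edge_pairs E v c)"

definition greedy_choice ::
    "nat set set \<Rightarrow> nat \<Rightarrow> (nat \<times> nat set \<Rightarrow> nat) \<Rightarrow> (nat \<Rightarrow> nat) \<Rightarrow> nat \<Rightarrow> nat" where
  "greedy_choice E k c \<phi> v = (LEAST a. a \<in> {1..k} \<and> a \<notin> forbidden_colours E c \<phi> v)"

text \<open>greedy_colouring E k c w has coloured the vertices below w; all others have the junk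
  colour 0.\<close>
primrec greedy_colouring :: "nat set set \<Rightarrow> nat \<Rightarrow> (nat \<times> nat set \<Rightarrow> nat) \<Rightarrow> nat \<Rightarrow> nat \<Rightarrow> nat" where
  "greedy_colouring E k c 0 = (\<lambda>_. 0)"
| "greedy_colouring E k c (Suc w) =
    (greedy_colouring E k c w)(w := greedy_choice E k c (greedy_colouring E k c w) w)"

lemma greedy_colouring_stable:
  "u < w \<Longrightarrow> greedy_colouring E k c w u = greedy_colouring E k c (Suc u) u"
  by (induction w) (auto simp: less_Suc_eq)

lemma greedy_choice_not_forbidden:
  assumes "\<not> {1..k} \<subseteq> forbidden_colours E c \<phi> v"
  shows "greedy_choice E k c \<phi> v \<in> {1..k}" "greedy_choice E k c \<phi> v \<notin> forbidden_colours E c \<phi> v"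
proof -
  from assms have "\<exists>a. a \<in> {1..k} \<and> a \<notin> forbidden_colours E c \<phi> v" by blast
  from LeastI_ex[OF this] show "greedy_choice E k c \<phi> v \<in> {1..k}"
    "greedy_choice E k c \<phi> v \<notin> forbidden_colours E c \<phi> v"
    unfolding greedy_choice_def by simp_all
qed

lemma conflict_colorable_if_greedy_never_stuck:
  assumes sg: "simple_graph V E"
    and never_stuck: "\<forall>v\<in>V. \<not> {1..k} \<subseteq> forbidden_colours E c (greedy_colouring E k c v) v"
  shows "conflict_colorable V E k c"
proof -
  obtain N where N: "\<And>v. v \<in> V \<Longrightarrow> v < N"
    using sg unfolding simple_graph_def by (meson finite_nat_set_iff_bounded)
  define \<phi> where "\<phi> = greedy_colouring E k c N"
  have \<phi>_eq: "\<phi> v = greedy_choice E k c (greedy_colouring E k c v) v" if "v \<in> V" for v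
    unfolding \<phi>_def greedy_colouring_stable[OF N[OF that]] by simp
  have \<phi>_ok: "\<phi> v \<in> {1..k}" "\<phi> v \<notin> forbidden_colours E c (greedy_colouring E k c v) v"
    if "v \<in> V" for v
    using greedy_choice_not_forbidden never_stuck that \<phi>_eq[OF that] by auto
  have no_conflict: False
    if xy: "x < y" "{x, y} \<in> E" "\<phi> x = c (x, {x, y})" "\<phi> y = c (y, {x, y})" for x y
  proof -
    have V: "x \<in> V" "y \<in> V" using sg xy(2) unfolding simple_graph_def by auto
    have "greedy_colouring E k c y x = \<phi> x"
      unfolding \<phi>_def greedy_colouring_stable[OF xy(1)] greedy_colouring_stable[OF N[OF V(1)]] ..
    then have "c (y, {x, y}) \<in> forbidden_colours E c (greedy_colouring E k c y) y"
      using xy unfolding forbidden_colours_def hits_def edge_pairs_def earlier_neighbours_def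
      by (intro CollectI exI[of _ x]) simp
    then show False using \<phi>_ok(2)[OF V(2)] xy(4) by simp
  qed
  show ?thesis
    unfolding conflict_colorable_def
  proof (intro exI[of _ \<phi>] conjI ballI allI impI notI)
    fix e x y assume e: "e \<in> E" "e = {x, y} \<and> x \<noteq> y" and "\<phi> x = c (x, e) \<and> \<phi> y = c (y, e)"
    then show False
      using no_conflict[of x y] no_conflict[of y x] by (cases "x < y") (auto simp: insert_commute)
  qed (use \<phi>_ok in blast)
qed

lemma greedy_colouring_cong:
  assumes "\<And>x e. e \<in> E \<Longrightarrow> e \<subseteq> {..<v} \<Longrightarrow> x \<in> e \<Longrightarrow> c (x, e) = c' (x, e)"
  shows "w \<le> v \<Longrightarrow> greedy_colouring E k c w = greedy_colouring E k c' w"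
proof (induction w)
  case (Suc w)
  have "edge_pairs E w c = edge_pairs E w c'"
    using Suc.prems assms unfolding edge_pairs_def earlier_neighbours_def
    by (intro restrict_ext) auto
  then show ?case
    using Suc by (simp add: greedy_choice_def forbidden_colours_def)
qed simp

definition back_incidences :: "nat set set \<Rightarrow> nat \<Rightarrow> (nat \<times> nat set) set" where
  "back_incidences E v = (\<lambda>u. (u, {u, v})) ` earlier_neighbours E v \<union> (\<lambda>u. (v, {u, v})) ` earlier_neighbours E v"

lemma bij_betw_edge_pairs:
  "bij_betw (edge_pairs E v) (Pi\<^sub>E (back_incidences E v) (\<lambda>_. K))
     (Pi\<^sub>E (earlier_neighbours E v) (\<lambda>_. K \<times> K))"
proof -
  let ?U = "earlier_neighbours E v"
  have "edge_pairs E v = (\<lambda>c. \<lambda>u\<in>?U. (c (u, {u, v}), c (v, {u, v})))"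
    by (simp add: fun_eq_iff edge_pairs_def)
  moreover have "inj_on (\<lambda>u. (v, {u, v})) ?U"
    by (auto intro!: inj_onI simp: earlier_neighbours_def doubleton_eq_iff)
  moreover have "(\<lambda>u. (u, {u, v})) ` ?U \<inter> (\<lambda>u. (v, {u, v})) ` ?U = {}"
    by (auto simp: earlier_neighbours_def)
  ultimately show ?thesis
    unfolding back_incidences_def by (auto intro!: bij_betw_PiE_pairs inj_onI)
qed

lemma card_stuck_back_colourings_le:
  assumes "finite (earlier_neighbours E v)" "k \<ge> 1"
  shows "real (card {b \<in> Pi\<^sub>E (back_incidences E v) (\<lambda>_. {1..k}).
             {1..k} \<subseteq> hits (earlier_neighbours E v) t (edge_pairs E v b)})
           \<le> real (card (Pi\<^sub>E (back_incidences E v) (\<lambda>_. {1..k})))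
             * hit_prob k (card (earlier_neighbours E v)) ^ k"
proof -
  let ?U = "earlier_neighbours E v" and ?K = "{1..k}"
  have "card {b \<in> Pi\<^sub>E (back_incidences E v) (\<lambda>_. ?K). ?K \<subseteq> hits ?U t (edge_pairs E v b)}
      = card {z \<in> Pi\<^sub>E ?U (\<lambda>_. ?K \<times> ?K). ?K \<subseteq> hits ?U t z}"
    by (rule card_filter_bij_betw[OF bij_betw_edge_pairs])
  moreover have "card (Pi\<^sub>E (back_incidences E v) (\<lambda>_. ?K)) = k ^ (2 * card ?U)"
    using bij_betw_same_card[OF bij_betw_edge_pairs] assms(1)
    by (simp add: card_PiE card_cartesian_product power_mult power2_eq_square)
  ultimately show ?thesis
    using card_PiE_hits_superset_le[OF assms, of ?K t] by simp
qed

lemma finite_incidences: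
  assumes "simple_graph V E"
  shows "finite (incidences E)"
proof -
  have "finite E"
    using assms finite_subset[of E "Pow V"] unfolding simple_graph_def by auto
  moreover have "incidences E \<subseteq> V \<times> E"
    using assms unfolding incidences_def simple_graph_def by auto
  ultimately show ?thesis
    using assms finite_subset unfolding simple_graph_def by blast
qed

lemma forbidden_colours_merge_back_incidences:
  fixes E :: "nat set set" and v :: nat
  defines "A \<equiv> incidences E - back_incidences E v" and "B \<equiv> back_incidences E v"
  shows "forbidden_colours E (merge A B (a, b)) (greedy_colouring E k (merge A B (a, b)) v) v
      = hits (earlier_neighbours E v) (greedy_colouring E k a v) (edge_pairs E v b)"
proof -
  have "greedy_colouring E k (merge A B (a, b)) v = greedy_colouring E k a v"
  proof (rule greedy_colouring_cong)
    fix x e assume "e \<in> E" "e \<subseteq> {..<v}" "x \<in> e"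
    then have "(x, e) \<in> A"
      unfolding A_def B_def back_incidences_def incidences_def by auto
    then show "merge A B (a, b) (x, e) = a (x, e)"
      unfolding A_def B_def by simp
  qed simp
  moreover have "edge_pairs E v (merge A B (a, b)) = edge_pairs E v b"
    unfolding edge_pairs_def A_def B_def
    by (intro restrict_ext) (auto simp: back_incidences_def)
  ultimately show ?thesis
    unfolding forbidden_colours_def by simp
qed

text \<open>Split a local partition into its values on the back incidences at v and the rest:
  the greedy colours below v only see the rest, and given them the back incidences are
  uniform.\<close>
lemma card_greedy_stuck_le:
  assumes sg: "simple_graph V E" and k: "k \<ge> 1"
  shows "real (card {c \<in> local_partitions E k.
             {1..k} \<subseteq> forbidden_colours E c (greedy_colouring E k c v) v})
           \<le> real (card (local_partitions E k)) * hit_prob k (card V) ^ k"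
proof -
  define K where "K = {1..k}"
  define B where "B = back_incidences E v"
  define A where "A = incidences E - B"
  define U where "U = earlier_neighbours E v"
  have finV: "finite V" and EV: "\<And>e. e \<in> E \<Longrightarrow> e \<subseteq> V"
    using sg unfolding simple_graph_def by auto
  have "B \<subseteq> incidences E"
    unfolding B_def back_incidences_def incidences_def earlier_neighbours_def by auto
  then have AB: "incidences E = A \<union> B" "A \<inter> B = {}" and finAB: "finite A" "finite B"
    using finite_incidences[OF sg] unfolding A_def by (auto intro: finite_subset)
  have UV: "U \<subseteq> V"
    unfolding U_def earlier_neighbours_def using EV by auto
  have stuck_eq: "forbidden_colours E (merge A B (a, b)) (greedy_colouring E k (merge A B (a, b)) v) v
      = hits U (greedy_colouring E k a v) (edge_pairs E v b)" for a b
    unfolding A_def B_def U_def by (rule forbidden_colours_merge_back_incidences)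
  have "card {c \<in> local_partitions E k. K \<subseteq> forbidden_colours E c (greedy_colouring E k c v) v}
      = (\<Sum>a\<in>Pi\<^sub>E A (\<lambda>_. K).
           card {b \<in> Pi\<^sub>E B (\<lambda>_. K). K \<subseteq> hits U (greedy_colouring E k a v) (edge_pairs E v b)})"
    unfolding local_partitions_def AB(1) K_def[symmetric] stuck_eq[symmetric]
    by (rule card_PiE_filter_Un[OF finAB AB(2)]) (simp add: K_def)
  then have "real (card {c \<in> local_partitions E k. K \<subseteq> forbidden_colours E c (greedy_colouring E k c v) v})
      = (\<Sum>a\<in>Pi\<^sub>E A (\<lambda>_. K).
           real (card {b \<in> Pi\<^sub>E B (\<lambda>_. K). K \<subseteq> hits U (greedy_colouring E k a v) (edge_pairs E v b)}))"
    by simp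
  also have "\<dots> \<le> (\<Sum>a\<in>Pi\<^sub>E A (\<lambda>_. K). real (card (Pi\<^sub>E B (\<lambda>_. K))) * hit_prob k (card U) ^ k)"
    unfolding K_def B_def U_def
    using finite_subset[OF UV finV] k
    by (intro sum_mono card_stuck_back_colourings_le) (simp_all add: U_def)
  also have "\<dots> \<le> (\<Sum>a\<in>Pi\<^sub>E A (\<lambda>_. K). real (card (Pi\<^sub>E B (\<lambda>_. K))) * hit_prob k (card V) ^ k)"
    using hit_prob_mono[OF k card_mono[OF finV UV]] hit_prob_nonneg[OF k]
    by (intro sum_mono mult_left_mono power_mono) auto
  also have "\<dots> = real (card (local_partitions E k)) * hit_prob k (card V) ^ k"
    using finAB AB unfolding local_partitions_def K_def[symmetric]
    by (simp add: card_PiE card_Un_disjoint power_add)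
  finally show ?thesis unfolding K_def .
qed

lemma prob_colorable_ge:
  fixes E :: "nat set set"
  assumes sg: "simple_graph V E" and k: "k \<ge> 1"
  shows "prob_colorable V E k \<ge> 1 - real (card V) * hit_prob k (card V) ^ k"
proof -
  define \<Omega> where "\<Omega> = local_partitions E k"
  define Stuck where "Stuck v = {c \<in> \<Omega>. {1..k} \<subseteq> forbidden_colours E c (greedy_colouring E k c v) v}" for v
  define Bad where "Bad = {c \<in> \<Omega>. \<not> conflict_colorable V E k c}"
  have fin\<Omega>: "finite \<Omega>"
    unfolding \<Omega>_def local_partitions_def using finite_incidences[OF sg] by (intro finite_PiE) auto
  have "(\<lambda>i\<in>incidences E. 1) \<in> \<Omega>"
    unfolding \<Omega>_def local_partitions_def using k by auto
  then have nonempty: "\<Omega> \<noteq> {}"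
    by blast
  then have card\<Omega>: "card \<Omega> > 0"
    using fin\<Omega> card_gt_0_iff by blast
  have "Bad \<subseteq> (\<Union>v\<in>V. Stuck v)"
    using conflict_colorable_if_greedy_never_stuck[OF sg] unfolding Bad_def Stuck_def by blast
  moreover have "finite (\<Union>v\<in>V. Stuck v)"
    using fin\<Omega> by (rule finite_subset[rotated]) (auto simp: Stuck_def)
  ultimately have "card Bad \<le> card (\<Union>v\<in>V. Stuck v)"
    by (rule card_mono[rotated])
  also have "\<dots> \<le> (\<Sum>v\<in>V. card (Stuck v))"
    using sg unfolding simple_graph_def by (intro card_UN_le) simp
  finally have "real (card Bad) \<le> (\<Sum>v\<in>V. real (card (Stuck v)))"
    by (metis of_nat_le_iff of_nat_sum)
  also have "\<dots> \<le> (\<Sum>v\<in>V. real (card \<Omega>) * hit_prob k (card V) ^ k)"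
    unfolding Stuck_def \<Omega>_def by (intro sum_mono card_greedy_stuck_le[OF sg k])
  finally have bad: "real (card Bad) / real (card \<Omega>) \<le> real (card V) * hit_prob k (card V) ^ k"
    using card\<Omega> by (simp add: divide_le_eq mult_ac)
  have "{c \<in> \<Omega>. conflict_colorable V E k c} = \<Omega> - Bad" and "Bad \<subseteq> \<Omega>"
    unfolding Bad_def by auto
  then have "prob_colorable V E k = 1 - real (card Bad) / real (card \<Omega>)"
    using fin\<Omega> nonempty card_mono[OF fin\<Omega> \<open>Bad \<subseteq> \<Omega>\<close>]
    unfolding prob_colorable_def \<Omega>_def[symmetric]
    by (simp add: card_Diff_subset finite_subset of_nat_diff diff_divide_distrib)
  with bad show ?thesis by simp
qed

lemma ln_ge_1_of_ge_3:
  assumes "n \<ge> 3"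
  shows "ln (real n) \<ge> 1"
proof -
  have "exp 1 \<le> real n"
    using exp_le assms by linarith
  then show ?thesis
    using ln_le_cancel_iff[of "exp 1" "real n"] assms by simp
qed

lemma one_minus_inverse_square_power_ge:
  assumes n: "n \<ge> 3" and k: "real k ^ 2 \<ge> 16 * (real n / ln (real n))"
  shows "(1 - 1 / real k ^ 2) ^ n \<ge> real n powr (-1/8)"
proof -
  define p where "p = 1 / real k ^ 2"
  have ln1: "ln (real n) \<ge> 1"
    using ln_ge_1_of_ge_3[OF n] .
  have "ln (real n) < real n"
    using n by (intro ln_less_self) simp
  then have "real n / ln (real n) \<ge> 1"
    using ln1 by simp
  then have k16: "real k ^ 2 \<ge> 16"
    using k by linarith
  then have p: "0 \<le> p" "p \<le> 1/2"
    unfolding p_def by (auto simp: divide_le_eq)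
  have k0: "k > 0"
    using k16 by (cases k) auto
  have "real n * p = real n / real k ^ 2"
    unfolding p_def by simp
  also have "\<dots> \<le> real n / (16 * (real n / ln (real n)))"
    using k0 n ln1 by (intro divide_left_mono[OF k] mult_pos_pos) auto
  also have "\<dots> = ln (real n) / 16"
    using n ln1 by (simp add: field_simps)
  finally have np: "real n * p \<le> ln (real n) / 16" .
  have "p * (2 * p) \<le> p * 1"
    using p by (intro mult_left_mono) auto
  then have "ln (1 - p) \<ge> - 2 * p"
    using ln_one_minus_pos_lower_bound[OF p] by (simp add: power2_eq_square)
  have pos: "0 < 1 - p"
    using p by simp
  have "- (ln (real n) / 8) \<le> real n * (- 2 * p)"
    using np by simp
  also have "\<dots> \<le> real n * ln (1 - p)"
    using \<open>ln (1 - p) \<ge> - 2 * p\<close> by (intro mult_left_mono) auto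
  also have "\<dots> = ln ((1 - p) ^ n)"
    using pos by (simp add: ln_realpow)
  finally have "exp (- (ln (real n) / 8)) \<le> exp (ln ((1 - p) ^ n))"
    by simp
  then have "exp (- (ln (real n) / 8)) \<le> (1 - p) ^ n"
    using pos by simp
  moreover have "exp (- (ln (real n) / 8)) = real n powr (-1/8)"
    using n by (simp add: powr_def)
  ultimately show ?thesis
    unfolding p_def by simp
qed

lemma hit_prob_power_le_exp:
  assumes n: "n \<ge> 3" and k: "real k \<ge> 4 * sqrt (real n / ln (real n))"
  shows "hit_prob k n ^ k \<le> exp (- (4 * sqrt (real n / ln (real n)) * real n powr (-1/8)))"
proof -
  define y where "y = (1 - 1 / real k ^ 2) ^ n"
  have pos: "real n / ln (real n) \<ge> 0"
    using ln_ge_1_of_ge_3[OF n] by simp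
  have "(4 * sqrt (real n / ln (real n))) ^ 2 \<le> real k ^ 2"
    using k pos by (intro power_mono) auto
  then have "real k ^ 2 \<ge> 16 * (real n / ln (real n))"
    using pos by (simp add: power_mult_distrib)
  then have y_ge: "y \<ge> real n powr (-1/8)"
    unfolding y_def using n by (rule one_minus_inverse_square_power_ge[rotated])
  have "0 \<le> 1 - y"
    using hit_prob_nonneg[of k n] k pos unfolding y_def hit_prob_def
    by (cases "k = 0") (auto simp: power_0_left)
  then have "hit_prob k n ^ k \<le> exp (- y) ^ k"
    unfolding hit_prob_def y_def[symmetric]
    by (intro power_mono) (auto simp: add.commute[of 1] exp_ge_add_one_self[of "-y", simplified])
  also have "\<dots> = exp (- (real k * y))"
    by (simp add: exp_of_nat_mult[symmetric])
  also have "\<dots> \<le> exp (- (4 * sqrt (real n / ln (real n)) * real n powr (-1/8)))"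
    using k y_ge pos by (simp add: mult_mono)
  finally show ?thesis .
qed

lemma union_bound_eventually_le:
  assumes "\<epsilon> > 0"
  obtains N where "\<And>n k. n \<ge> N \<Longrightarrow> real k \<ge> 4 * sqrt (real n / ln (real n))
    \<Longrightarrow> real n * hit_prob k n ^ k \<le> \<epsilon>"
proof -
  have "(\<lambda>n::nat. real n * exp (- (4 * sqrt (real n / ln (real n)) * real n powr (-1/8))))
      \<longlonglongrightarrow> 0"
    by real_asymp
  from order_tendstoD(2)[OF this assms] obtain N where
    N: "\<And>n. n \<ge> N \<Longrightarrow> real n * exp (- (4 * sqrt (real n / ln (real n)) * real n powr (-1/8))) < \<epsilon>"
    unfolding eventually_sequentially by blast
  show ?thesis
  proof (rule that[of "max N 3"])
    fix n k assume "max N 3 \<le> n" "real k \<ge> 4 * sqrt (real n / ln (real n))"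
    then have "hit_prob k n ^ k \<le> exp (- (4 * sqrt (real n / ln (real n)) * real n powr (-1/8)))"
      by (intro hit_prob_power_le_exp) auto
    then have "real n * hit_prob k n ^ k
        \<le> real n * exp (- (4 * sqrt (real n / ln (real n)) * real n powr (-1/8)))"
      by (rule mult_left_mono) simp
    with N[of n] \<open>max N 3 \<le> n\<close> show "real n * hit_prob k n ^ k \<le> \<epsilon>"
      by linarith
  qed
qed

lemma card_edges_le_square:
  assumes "simple_graph V E"
  shows "card E \<le> card V ^ 2"
proof -
  have finV: "finite V" using assms unfolding simple_graph_def by auto
  have "card E \<le> card {e. e \<subseteq> V \<and> card e = 2}"
    using assms finV unfolding simple_graph_def by (intro card_mono) (auto intro: finite_subset[of _ "Pow V"])
  also have "\<dots> = card V choose 2"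
    using n_subsets[OF finV] .
  also have "\<dots> \<le> card V ^ 2"
    by (metis binomial_eq_0 binomial_le_pow not_le zero_le)
  finally show ?thesis .
qed

lemma sqrt_div_ln_ge_half:
  fixes n \<rho> :: real
  assumes "5 \<le> n" "n / 4 \<le> \<rho>" "\<rho> \<le> n"
  shows "sqrt (n / ln n) / 2 \<le> sqrt (\<rho> / ln \<rho>)"
proof -
  have "ln \<rho> > 0" "ln \<rho> \<le> ln n"
    using assms by auto
  then have "(n / 4) / ln n \<le> \<rho> / ln \<rho>"
    using assms by (intro frac_le) auto
  then have "(n / ln n) / 4 \<le> \<rho> / ln \<rho>"
    by simp
  then have "sqrt ((n / ln n) / 4) \<le> sqrt (\<rho> / ln \<rho>)"
    by (rule real_sqrt_le_mono)
  moreover have "sqrt (4::real) = 2"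
    by (simp add: real_sqrt_eq_iff)
  ultimately show ?thesis
    by (simp add: real_sqrt_divide real_sqrt_mult)
qed

lemma prob_colorable_dense_ge:
  assumes "\<epsilon> > 0"
  obtains N where "\<And>(V :: nat set) E k. simple_graph V E \<Longrightarrow> card V \<ge> N
    \<Longrightarrow> real (card V) ^ 2 \<le> 4 * real (card E)
    \<Longrightarrow> real k \<ge> 8 * sqrt ((card E / card V) / ln (card E / card V))
    \<Longrightarrow> prob_colorable V E k \<ge> 1 - \<epsilon>"
proof -
  obtain N where N: "\<And>n k. n \<ge> N \<Longrightarrow> real k \<ge> 4 * sqrt (real n / ln (real n))
      \<Longrightarrow> real n * hit_prob k n ^ k \<le> \<epsilon>"
    using union_bound_eventually_le[OF assms] by blast
  show ?thesis
  proof (rule that[of "max N 5"])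
    fix V :: "nat set" and E k
    assume sg: "simple_graph V E" and n: "card V \<ge> max N 5"
      and dense: "real (card V) ^ 2 \<le> 4 * real (card E)"
      and k: "real k \<ge> 8 * sqrt ((card E / card V) / ln (card E / card V))"
    define n where "n = real (card V)"
    define \<rho> where "\<rho> = real (card E) / n"
    have "real (card E) \<le> n ^ 2"
      using card_edges_le_square[OF sg] unfolding n_def by (metis of_nat_le_iff of_nat_power)
    moreover have "n > 0"
      using n unfolding n_def by simp
    ultimately have "n / 4 \<le> \<rho>" "\<rho> \<le> n"
      using dense unfolding \<rho>_def n_def[symmetric] by (auto simp: field_simps power2_eq_square)
    then have k4: "real k \<ge> 4 * sqrt (n / ln n)"
      using sqrt_div_ln_ge_half[of n \<rho>] k n unfolding \<rho>_def n_def by auto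
    have "sqrt (n / ln n) > 0"
      using ln_ge_1_of_ge_3[of "card V"] n unfolding n_def by simp
    then have "k \<ge> 1"
      using k4 by (cases k) auto
    then have "prob_colorable V E k \<ge> 1 - real (card V) * hit_prob k (card V) ^ k"
      by (rule prob_colorable_ge[OF sg])
    moreover have "real (card V) * hit_prob k (card V) ^ k \<le> \<epsilon>"
      using N k4 n unfolding n_def by simp
    ultimately show "prob_colorable V E k \<ge> 1 - \<epsilon>"
      by simp
  qed
qed

lemma prob_colorable_ge_delta_7:
  fixes f :: "nat \<Rightarrow> real"
  assumes f_small: "\<forall>\<^sub>F n in sequentially. f n \<le> 1/2" and "\<epsilon> > 0"
  shows "\<exists>n0::nat. n0 \<ge> 1 \<and>
      (\<forall>(V::nat set) (E::nat set set) (k::nat).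
         simple_graph V E \<and> card V \<ge> n0 \<and>
         real (card E) \<ge> (1 - f (card V)) * real (card V)^2 / 2 \<and>
         max_density V E = real (card E) / real (card V) \<and>
         real k \<ge> (1 + 7) * sqrt (max_density V E / ln (max_density V E))
         \<longrightarrow> prob_colorable V E k \<ge> 1 - \<epsilon>)"
proof -
  obtain N where N: "\<And>(V :: nat set) E k. simple_graph V E \<Longrightarrow> card V \<ge> N
      \<Longrightarrow> real (card V) ^ 2 \<le> 4 * real (card E)
      \<Longrightarrow> real k \<ge> 8 * sqrt ((card E / card V) / ln (card E / card V))
      \<Longrightarrow> prob_colorable V E k \<ge> 1 - \<epsilon>"
    using prob_colorable_dense_ge[OF assms(2)] by blast
  obtain N' where N': "\<And>n. n \<ge> N' \<Longrightarrow> f n \<le> 1/2"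
    using f_small unfolding eventually_sequentially by blast
  show ?thesis
  proof (intro exI[of _ "max (max N N') 1"] conjI allI impI)
    fix V :: "nat set" and E k
    assume "simple_graph V E \<and> card V \<ge> max (max N N') 1 \<and>
         real (card E) \<ge> (1 - f (card V)) * real (card V)^2 / 2 \<and>
         max_density V E = real (card E) / real (card V) \<and>
         real k \<ge> (1 + 7) * sqrt (max_density V E / ln (max_density V E))"
    then have sg: "simple_graph V E" and n: "card V \<ge> max (max N N') 1"
      and m: "real (card E) \<ge> (1 - f (card V)) * real (card V)^2 / 2"
      and \<rho>: "max_density V E = real (card E) / real (card V)"
      and k: "real k \<ge> (1 + 7) * sqrt (max_density V E / ln (max_density V E))"
      by blast+
    have "(1/2) * real (card V) ^ 2 / 2 \<le> (1 - f (card V)) * real (card V) ^ 2 / 2"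
      using N'[of "card V"] n by (intro divide_right_mono mult_right_mono) auto
    with m have "real (card V) ^ 2 \<le> 4 * real (card E)"
      by simp
    moreover have "real k \<ge> 8 * sqrt ((card E / card V) / ln (card E / card V))"
      using k unfolding \<rho> by simp
    ultimately show "prob_colorable V E k \<ge> 1 - \<epsilon>"
      using N[OF sg] n by simp
  qed simp
qed

theorem theorem3p9:
  fixes f :: "nat \<Rightarrow> real"
  assumes f_nonneg: "\<forall>n>0. f n \<ge> 0"
    and f_lim: "(\<lambda>n. f n * (ln (real n))^2) \<longlonglongrightarrow> 0"
  shows "\<forall>\<epsilon>::real. 0 < \<epsilon> \<and> \<epsilon> < 1/2 \<longrightarrow>
    (\<exists>n0::nat. n0 \<ge> 1 \<and> (\<exists>\<delta>::real. \<delta> > 0 \<and>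
      (\<forall>(V::nat set) (E::nat set set) (k::nat).
         simple_graph V E \<and> card V \<ge> n0 \<and>
         real (card E) \<ge> (1 - f (card V)) * real (card V)^2 / 2 \<and>
         max_density V E = real (card E) / real (card V) \<and>
         real k \<ge> (1 + \<delta>) * sqrt (max_density V E / ln (max_density V E))
         \<longrightarrow> prob_colorable V E k \<ge> 1 - \<epsilon>)))"
proof -
  have "\<forall>\<^sub>F n in sequentially. f n * ln (real n) ^ 2 < 1/2 \<and> n \<ge> 3"
    using order_tendstoD(2)[OF f_lim, of "1/2"] eventually_ge_at_top[of 3]
    by (auto intro: eventually_conj)
  then have "\<forall>\<^sub>F n in sequentially. f n \<le> 1/2"
  proof eventually_elim
    case (elim n)
    then have "f n * 1 \<le> f n * ln (real n) ^ 2"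
      using f_nonneg ln_ge_1_of_ge_3[of n] by (intro mult_left_mono) (auto simp: one_le_power)
    with elim show ?case by simp
  qed
  moreover have "(0::real) < 7"
    by simp
  ultimately show ?thesis
    using prob_colorable_ge_delta_7 by blast
qed

end
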